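(* Let $G=(V,E)$ be a finite, simple, undirected, connected graph, let $S\subseteq V$ be nonempty and let $\ell\geq 1$ be an integer. Then $S$ is an $\ell$-solid-resolving set of $G$ if and only if for every vertex $x\in V$ and every nonempty set $Y\subseteq V$ with $x\notin Y$ and $|Y|\leq \ell$ there exists $s\in S$ such that $d(s,x)<d(s,Y)$.
   Context: $d(u,v)$ denotes the shortest-path distance in $G$, and for a nonempty $X\subseteq V$, $d(s,X)=\min_{x\in X} d(s,x)$. For $S=\{s_1,\dots,s_k\}\subseteq V$ and nonempty $X\subseteq V$, the distance array is $\mathcal{D}_S(X)=(d(s_1,X),\dots,d(s_k,X))$. A set $S\subseteq V$ is an $\ell$-solid-resolving set of $G$ if for all distinct nonempty sets $X,Y\subseteq V$ with $|X|\leq \ell$ (and $Y$ of arbitrary size) we have $\mathcal{D}_S(X)\neq \mathcal{D}_S(Y)$. *)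

theory Defs
  imports Main
begin

definition simple_graph :: "'a set \<Rightarrow> ('a \<Rightarrow> 'a \<Rightarrow> bool) \<Rightarrow> bool" where
  "simple_graph V E \<longleftrightarrow> finite V \<and> (\<forall>u v. E u v \<longrightarrow> u \<in> V \<and> v \<in> V)
     \<and> (\<forall>u v. E u v \<longrightarrow> E v u) \<and> (\<forall>v. \<not> E v v)"

fun is_walk :: "('a \<Rightarrow> 'a \<Rightarrow> bool) \<Rightarrow> 'a list \<Rightarrow> bool" where
  "is_walk E [] = False"
| "is_walk E [x] = True"
| "is_walk E (x # y # xs) = (E x y \<and> is_walk E (y # xs))"

definition walk_betw :: "('a \<Rightarrow> 'a \<Rightarrow> bool) \<Rightarrow> 'a \<Rightarrow> 'a list \<Rightarrow> 'a \<Rightarrow> bool" where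
  "walk_betw E u p v \<longleftrightarrow> is_walk E p \<and> hd p = u \<and> last p = v"

definition connected_graph :: "'a set \<Rightarrow> ('a \<Rightarrow> 'a \<Rightarrow> bool) \<Rightarrow> bool" where
  "connected_graph V E \<longleftrightarrow> V \<noteq> {} \<and> (\<forall>u\<in>V. \<forall>v\<in>V. \<exists>p. walk_betw E u p v)"

definition dist :: "('a \<Rightarrow> 'a \<Rightarrow> bool) \<Rightarrow> 'a \<Rightarrow> 'a \<Rightarrow> nat" where
  "dist E u v = (LEAST n. \<exists>p. walk_betw E u p v \<and> length p = Suc n)"

definition set_dist :: "('a \<Rightarrow> 'a \<Rightarrow> bool) \<Rightarrow> 'a \<Rightarrow> 'a set \<Rightarrow> nat" where
  "set_dist E s X = Min (dist E s ` X)"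

text \<open>Distance array of X with respect to S: represented as the function s \<mapsto> d(s,X) on S.
  Two arrays are equal iff they agree at every s in S.\<close>

definition dist_array :: "('a \<Rightarrow> 'a \<Rightarrow> bool) \<Rightarrow> 'a set \<Rightarrow> 'a set \<Rightarrow> ('a \<Rightarrow> nat)" where
  "dist_array E S X = (\<lambda>s. if s \<in> S then set_dist E s X else 0)"

definition solid_resolving :: "'a set \<Rightarrow> ('a \<Rightarrow> 'a \<Rightarrow> bool) \<Rightarrow> nat \<Rightarrow> 'a set \<Rightarrow> bool" where
  "solid_resolving V E l S \<longleftrightarrow> S \<subseteq> V \<and>
     (\<forall>X Y. X \<subseteq> V \<and> Y \<subseteq> V \<and> X \<noteq> {} \<and> Y \<noteq> {} \<and> X \<noteq> Y \<and> card X \<le> l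
        \<longrightarrow> dist_array E S X \<noteq> dist_array E S Y)"

end

theory Submission
  imports Defs
begin

(* d(s, -) is a minimum, so d(s, insert x Y) = min (d(s, x)) (d(s, Y)): the arrays of Y and
   insert x Y differ exactly when some s in S has d(s, x) < d(s, Y). Two distinct sets X, Y with
   |X| <= l always have a vertex in one but not the other such that the other has size at most l,
   and that vertex already separates their arrays. *)

lemma set_dist_le:
  assumes "finite X" and "x \<in> X"
  shows "set_dist E s X \<le> dist E s x"
  using assms unfolding set_dist_def by simp

lemma set_dist_insert:
  assumes "finite Y" and "Y \<noteq> {}"
  shows "set_dist E s (insert x Y) = min (dist E s x) (set_dist E s Y)"
  using assms unfolding set_dist_def by simp

lemma dist_array_insert_eq_iff:
  assumes "finite Y" and "Y \<noteq> {}"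
  shows "dist_array E S (insert x Y) = dist_array E S Y \<longleftrightarrow>
    (\<forall>s\<in>S. set_dist E s Y \<le> dist E s x)"
proof -
  have "dist_array E S (insert x Y) = dist_array E S Y \<longleftrightarrow>
      (\<forall>s\<in>S. set_dist E s (insert x Y) = set_dist E s Y)"
    by (auto simp: dist_array_def fun_eq_iff)
  also have "\<dots> \<longleftrightarrow> (\<forall>s\<in>S. set_dist E s Y \<le> dist E s x)"
    using assms by (auto simp: set_dist_insert min_def)
  finally show ?thesis .
qed

lemma dist_array_neqI:
  assumes "finite Y" and "y \<in> Y" and "s \<in> S" and "dist E s y < set_dist E s X"
  shows "dist_array E S X \<noteq> dist_array E S Y"
proof -
  have "set_dist E s Y < set_dist E s X"
    using set_dist_le[OF assms(1,2), of E s] assms(4) by simp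
  then show ?thesis
    using assms(3) unfolding dist_array_def by (metis less_irrefl)
qed

lemma solid_resolving_dist_array_neq:
  assumes "solid_resolving V E l S" and "X \<subseteq> V" and "Y \<subseteq> V"
    and "X \<noteq> {}" and "Y \<noteq> {}" and "X \<noteq> Y" and "card X \<le> l"
  shows "dist_array E S X \<noteq> dist_array E S Y"
  using assms unfolding solid_resolving_def by blast

lemma solid_resolving_iff:
  assumes "finite V" and "S \<subseteq> V"
  shows "solid_resolving V E l S \<longleftrightarrow>
    (\<forall>x\<in>V. \<forall>Y. Y \<subseteq> V \<and> Y \<noteq> {} \<and> x \<notin> Y \<and> card Y \<le> l
       \<longrightarrow> (\<exists>s\<in>S. dist E s x < set_dist E s Y))" (is "_ \<longleftrightarrow> ?separating")
proof
  assume resolving: "solid_resolving V E l S"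
  show ?separating
  proof (intro ballI allI impI)
    fix x Y assume "x \<in> V" and Y: "Y \<subseteq> V \<and> Y \<noteq> {} \<and> x \<notin> Y \<and> card Y \<le> l"
    then have "dist_array E S Y \<noteq> dist_array E S (insert x Y)"
      using resolving by (intro solid_resolving_dist_array_neq) auto
    moreover have "finite Y"
      using Y assms(1) finite_subset by blast
    ultimately show "\<exists>s\<in>S. dist E s x < set_dist E s Y"
      using Y dist_array_insert_eq_iff[of Y E S x] by (metis not_le)
  qed
next
  assume separating: ?separating
  show "solid_resolving V E l S"
    unfolding solid_resolving_def
  proof (intro conjI allI impI)
    fix X Y assume XY: "X \<subseteq> V \<and> Y \<subseteq> V \<and> X \<noteq> {} \<and> Y \<noteq> {} \<and> X \<noteq> Y \<and> card X \<le> l"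
    then have "finite X" "finite Y"
      using assms(1) finite_subset by blast+
    show "dist_array E S X \<noteq> dist_array E S Y"
    proof (cases "Y \<subseteq> X")
      case False
      then obtain y where "y \<in> Y" "y \<notin> X" by blast
      with separating XY obtain s where "s \<in> S" "dist E s y < set_dist E s X"
        by (meson subsetD)
      with \<open>finite Y\<close> \<open>y \<in> Y\<close> show ?thesis by (rule dist_array_neqI)
    next
      case True
      with XY obtain x where "x \<in> X" "x \<notin> Y" by blast
      have "card Y < card X"
        using True XY \<open>finite X\<close> by (intro psubset_card_mono) auto
      then have "card Y \<le> l"
        using XY by linarith
      with separating XY \<open>x \<in> X\<close> \<open>x \<notin> Y\<close> obtain s
        where "s \<in> S" "dist E s x < set_dist E s Y"
        by (meson subsetD)
      with \<open>finite X\<close> \<open>x \<in> X\<close> show ?thesis by (metis dist_array_neqI)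
    qed
  qed (rule assms(2))
qed

theorem mainTheorem1:
  fixes V :: "'a set" and E :: "'a \<Rightarrow> 'a \<Rightarrow> bool" and S :: "'a set" and l :: nat
  assumes "simple_graph V E" and "connected_graph V E"
    and "S \<subseteq> V" and "S \<noteq> {}" and "l \<ge> 1"
  shows "solid_resolving V E l S \<longleftrightarrow>
    (\<forall>x\<in>V. \<forall>Y. Y \<subseteq> V \<and> Y \<noteq> {} \<and> x \<notin> Y \<and> card Y \<le> l
       \<longrightarrow> (\<exists>s\<in>S. dist E s x < set_dist E s Y))"
proof -
  have "finite V"
    using assms(1) unfolding simple_graph_def by blast
  then show ?thesis
    using assms(3) by (rule solid_resolving_iff)
qed

end
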